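(* Let $\Omega=(0,1)^2$, $N\ge2$, $h=1/N$, with grid points $(ih,jh)$, $0\le i,j\le N$; vectors $Z\in\mathbb{R}^{(N+1)^2}$ are indexed by grid points, $Z_I$ denotes the components at grid points in $\Omega$ and $Z_\partial$ those on $\partial\Omega$. Let $\mathcal{L}_h$ be the five-point operator $(\mathcal{L}_hZ)_{i,j}=-h^{-2}(z_{i-1,j}+z_{i+1,j}-4z_{i,j}+z_{i,j-1}+z_{i,j+1})$ at interior grid points. Let $\Omega=\Omega_1\cup\Omega_2$ be an overlapping decomposition into subdomains whose boundaries lie on grid lines; for $i=1,2$ let $Z_i,Z_{i,I},Z_{i,\partial}$ be the components of $Z$ at grid points of $\overline{\Omega_i}$, $\Omega_i$, $\partial\Omega_i$, and $\mathcal{L}_h^{(i)}$ the five-point operator at grid points of $\Omega_i$ acting on vectors indexed by grid points of $\overline{\Omega_i}$. Let $\alpha>0$, $F,Y_d\in\mathbb{R}^{(N+1)^2}$, and let $(Y,P)$ solve $$\mathcal{L}_hY=F_I-\alpha^{-1}h^{-2}P_I,\ Y_\partial=0;\qquad \mathcal{L}_h(h^{-2}P)=Y_I-Y_{d,I},\ P_\partial=0.$$ Given $Y^{(0)},P^{(0)}$ with $Y^{(0)}_\partial=P^{(0)}_\partial=0$, for $k=0,1,2,\dots$ and $i=1,2$ (in the order $i=1$ then $i=2$) define $Y^{(2k+i)},P^{(2k+i)}$ by $$\mathcal{L}_h^{(i)}Y^{(2k+i)}_i=F_{i,I}-\alpha^{-1}h^{-2}P^{(2k+i)}_{i,I},\qquad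 \mathcal{L}_h^{(i)}(h^{-2}P^{(2k+i)}_i)=Y^{(2k+i)}_{i,I}-Y_{d,i,I},$$ $Y^{(2k+i)}_{i,\partial}=Y^{(2k+i-1)}_{i,\partial}$, $P^{(2k+i)}_{i,\partial}=P^{(2k+i-1)}_{i,\partial}$, and $Y^{(2k+i)},P^{(2k+i)}$ equal to $Y^{(2k+i-1)},P^{(2k+i-1)}$ at all grid points not in $\Omega_i$. Define $E^{(j)}=(Y-Y^{(j)})^2+\alpha^{-1}h^{-4}(P-P^{(j)})^2$ (componentwise squares). Suppose the Schwarz alternating method for $\mathcal{L}_hW=0$, $W_\partial=0$ (namely $\mathcal{L}_h^{(i)}W^{(2k+i)}_i=0$, $W^{(2k+i)}_{i,\partial}=W^{(2k+i-1)}_{i,\partial}$, $W^{(2k+i)}=W^{(2k+i-1)}$ at grid points not in $\Omega_i$) is convergent with rate $\rho_{e,d}\in(0,1)$ under the maximum norm, i.e. $\max\{W^{(2k)}\}\le\rho_{e,d}\max\{W^{(2(k-1))}\}$ for $k\ge1$ and any initial guess. Then for $k=1,2,\dots$, $$\sum_{s=1}^{(N+1)^2}h^2\,(E^{(2k)})_s\le C\rho_{e,d}^k\max\{E^{(0)}\},$$ where $C>0$ is a constant independent of $h$, $\rho_{e,d}$ and $\alpha$.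
   Context: The $(Y,P)$ system is the discrete first-order optimality system (control eliminated) of the five-point finite difference discretization of minimizing $\frac12\|y-y_d\|_{L^2}^2+\frac\alpha2\|u\|_{L^2}^2$ subject to $-\Delta y=f+u$ in $(0,1)^2$, $y=0$ on the boundary. $\max\{\cdot\}$ denotes the maximum over all components. *)

theory Defs
  imports "HOL-Analysis.Analysis"
begin

text \<open>Grid functions: a vector Z in R^((N+1)^2) is a function nat => nat => real,
  component (a,b) corresponding to the grid point (a h, b h), 0 <= a,b <= N, h = 1/N.\<close>

type_synonym gridfun = "nat \<Rightarrow> nat \<Rightarrow> real"

definition grid_pts :: "nat \<Rightarrow> (nat \<times> nat) set" where
  "grid_pts N = {(a,b). a \<le> N \<and> b \<le> N}"

definition interior_pts :: "nat \<Rightarrow> (nat \<times> nat) set" where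
  "interior_pts N = {(a,b). 1 \<le> a \<and> a < N \<and> 1 \<le> b \<and> b < N}"

definition boundary_pts :: "nat \<Rightarrow> (nat \<times> nat) set" where
  "boundary_pts N = grid_pts N - interior_pts N"

definition unit_sq :: "(real \<times> real) set" where
  "unit_sq = {(x,y). 0 < x \<and> x < 1 \<and> 0 < y \<and> y < 1}"

definition sub_pts :: "nat \<Rightarrow> (real \<times> real) set \<Rightarrow> (nat \<times> nat) set" where
  "sub_pts N D = {(a,b). a \<le> N \<and> b \<le> N \<and> (real a / real N, real b / real N) \<in> D}"

text \<open>Five-point operator (h = 1/N, so h^-2 = N^2), evaluated at an interior point (a,b).\<close>
definition lap5 :: "nat \<Rightarrow> gridfun \<Rightarrow> nat \<Rightarrow> nat \<Rightarrow> real" where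
  "lap5 N Z a b = - ((real N)^2 * (Z (a-1) b + Z (a+1) b - 4 * Z a b + Z a (b-1) + Z a (b+1)))"

definition gmax :: "nat \<Rightarrow> gridfun \<Rightarrow> real" where
  "gmax N Z = Max ((\<lambda>(a,b). Z a b) ` grid_pts N)"

definition gmaxnorm :: "nat \<Rightarrow> gridfun \<Rightarrow> real" where
  "gmaxnorm N Z = Max ((\<lambda>(a,b). \<bar>Z a b\<bar>) ` grid_pts N)"

definition admissible_decomp :: "nat \<Rightarrow> (real \<times> real) set \<Rightarrow> (real \<times> real) set \<Rightarrow> bool" where
  "admissible_decomp N O1 O2 \<longleftrightarrow>
     open O1 \<and> open O2 \<and> connected O1 \<and> connected O2 \<and>
     O1 \<union> O2 = unit_sq \<and> O1 \<inter> O2 \<noteq> {} \<and>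
     (\<forall>p \<in> frontier O1 \<union> frontier O2.
        real N * fst p \<in> \<int> \<or> real N * snd p \<in> \<int>)"

text \<open>Subdomain active at step m >= 1: m = 2k+i, i = 1 for odd m, i = 2 for even m.\<close>
definition active_sub :: "nat \<Rightarrow> (real \<times> real) set \<Rightarrow> (real \<times> real) set \<Rightarrow> nat \<Rightarrow> (nat \<times> nat) set" where
  "active_sub N O1 O2 m = (if odd m then sub_pts N O1 else sub_pts N O2)"

definition schwarz_laplace ::
  "nat \<Rightarrow> (real \<times> real) set \<Rightarrow> (real \<times> real) set \<Rightarrow> (nat \<Rightarrow> gridfun) \<Rightarrow> bool" where
  "schwarz_laplace N O1 O2 W \<longleftrightarrow>
     (\<forall>(a,b) \<in> boundary_pts N. W 0 a b = 0) \<and>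
     (\<forall>m \<ge> 1.
        (\<forall>(a,b) \<in> active_sub N O1 O2 m. lap5 N (W m) a b = 0) \<and>
        (\<forall>(a,b) \<in> grid_pts N - active_sub N O1 O2 m. W m a b = W (m-1) a b))"

definition optsys :: "nat \<Rightarrow> real \<Rightarrow> gridfun \<Rightarrow> gridfun \<Rightarrow> gridfun \<Rightarrow> gridfun \<Rightarrow> bool" where
  "optsys N \<alpha> F Yd Y P \<longleftrightarrow>
     (\<forall>(a,b) \<in> interior_pts N.
        lap5 N Y a b = F a b - (1/\<alpha>) * (real N)^2 * P a b \<and>
        lap5 N (\<lambda>i j. (real N)^2 * P i j) a b = Y a b - Yd a b) \<and>
     (\<forall>(a,b) \<in> boundary_pts N. Y a b = 0 \<and> P a b = 0)"

definition schwarz_opt ::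
  "nat \<Rightarrow> (real \<times> real) set \<Rightarrow> (real \<times> real) set \<Rightarrow> real \<Rightarrow> gridfun \<Rightarrow> gridfun
     \<Rightarrow> (nat \<Rightarrow> gridfun) \<Rightarrow> (nat \<Rightarrow> gridfun) \<Rightarrow> bool" where
  "schwarz_opt N O1 O2 \<alpha> F Yd Ys Ps \<longleftrightarrow>
     (\<forall>(a,b) \<in> boundary_pts N. Ys 0 a b = 0 \<and> Ps 0 a b = 0) \<and>
     (\<forall>m \<ge> 1.
        (\<forall>(a,b) \<in> active_sub N O1 O2 m.
           lap5 N (Ys m) a b = F a b - (1/\<alpha>) * (real N)^2 * Ps m a b \<and>
           lap5 N (\<lambda>i j. (real N)^2 * Ps m i j) a b = Ys m a b - Yd a b) \<and>
        (\<forall>(a,b) \<in> grid_pts N - active_sub N O1 O2 m.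
           Ys m a b = Ys (m-1) a b \<and> Ps m a b = Ps (m-1) a b))"

definition err :: "nat \<Rightarrow> real \<Rightarrow> gridfun \<Rightarrow> gridfun \<Rightarrow> gridfun \<Rightarrow> gridfun \<Rightarrow> gridfun" where
  "err N \<alpha> Y P Yj Pj = (\<lambda>a b. (Y a b - Yj a b)^2 + (1/\<alpha>) * (real N)^4 * (P a b - Pj a b)^2)"

end

theory Submission
  imports Defs "HOL-Library.Function_Algebras"
begin

(* With e = Y - Y' and q = h^-2 (P - P') for a Schwarz iterate (Y', P'), the optimality
   equations on the active subdomain give L_h e = -q/alpha and L_h q = e. Since
   L_h(z^2) <= 2 z L_h z, the error E = e^2 + q^2/alpha satisfies L_h E <= 0 there, and E is
   unchanged elsewhere. By the discrete maximum principle the errors E^(m) are therefore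
   dominated by the Schwarz iterates W^(m) for the Laplace equation started from
   W^(0) = E^(0), which contract by rho every double step. Summing h^2 W^(2k) over the
   (N+1)^2 grid points gives the constant C = 4. *)

lemma (in vector_space) linear_inj_on_subspace_imp_surj_on:
  assumes "Vector_Spaces.linear scale scale T"
    and S: "subspace S" "S \<subseteq> span B" "finite B"
    and maps: "T ` S \<subseteq> S" and inj: "inj_on T S"
  shows "T ` S = S"
proof -
  interpret T: Vector_Spaces.linear scale scale T by fact
  obtain B' where B': "B' \<subseteq> S" "independent B'" "S \<subseteq> span B'"
    by (rule maximal_independent_subset)
  have span_B': "span B' = S"
    using span_subspace[OF B'(1,3) S(1)] .
  have "B' \<subseteq> span B"
    using B'(1) S(2) by (rule order_trans)
  then have fin_B': "finite B'"
    using independent_span_bound[OF S(3) B'(2)] by blast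
  have indep: "independent (T ` B')"
    using T.independent_injective_image[OF B'(2)] inj span_B' by simp
  have card: "card (T ` B') = card B'"
    using card_image[OF inj_on_subset[OF inj B'(1)]] .
  have "S \<subseteq> span (T ` B')"
  proof
    fix g assume "g \<in> S"
    show "g \<in> span (T ` B')"
    proof (rule ccontr)
      assume g: "g \<notin> span (T ` B')"
      have "insert g (T ` B') \<subseteq> span B'"
        using \<open>g \<in> S\<close> maps B'(1) span_B' by blast
      then have "card (insert g (T ` B')) \<le> card B'"
        using independent_span_bound[OF fin_B' independent_insertI[OF g indep]] by blast
      moreover have "g \<notin> T ` B'"
        using g span_base by blast
      ultimately show False
        using card fin_B' by simp
    qed
  qed
  then have "S \<subseteq> T ` S"
    using T.span_image[of B'] span_B' by simp
  with maps show ?thesis by (rule subset_antisym)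
qed

lemma finite_support_linear_inj_imp_surj:
  fixes T :: "('x \<Rightarrow> real) \<Rightarrow> 'x \<Rightarrow> real"
  assumes D: "finite D"
    and add: "\<And>f g. T (f + g) = T f + T g"
    and scale: "\<And>c f. T (\<lambda>x. c * f x) = (\<lambda>x. c * T f x)"
    and support: "\<And>f x. x \<notin> D \<Longrightarrow> T f x = 0"
    and inj: "\<And>f. (\<forall>x. x \<notin> D \<longrightarrow> f x = 0) \<Longrightarrow> T f = 0 \<Longrightarrow> f = 0"
    and g: "\<forall>x. x \<notin> D \<longrightarrow> g x = 0"
  shows "\<exists>f. (\<forall>x. x \<notin> D \<longrightarrow> f x = 0) \<and> T f = g"
proof -
  define sc where "sc c f = (\<lambda>x. c * f x)" for c :: real and f :: "'x \<Rightarrow> real"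
  interpret V: vector_space sc
    by unfold_locales (auto simp: sc_def fun_eq_iff algebra_simps)
  interpret T: Vector_Spaces.linear sc sc T
    by unfold_locales (simp_all add: sc_def add scale)
  define S where "S = {f :: 'x \<Rightarrow> real. \<forall>x. x \<notin> D \<longrightarrow> f x = 0}"
  define \<delta> where "\<delta> p = (\<lambda>x. if x = p then 1 else 0 :: real)" for p :: 'x
  have sum_apply: "(\<Sum>p\<in>A. h p) x = (\<Sum>p\<in>A. h p x)" for A and h :: "'x \<Rightarrow> 'x \<Rightarrow> real" and x
    by (induction A rule: infinite_finite_induct) auto
  have "V.subspace S"
    by (rule V.subspaceI) (auto simp: S_def sc_def)
  moreover have "S \<subseteq> V.span (\<delta> ` D)"
  proof
    fix f assume "f \<in> S"
    then have "f = (\<Sum>p\<in>D. sc (f p) (\<delta> p))"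
      using D by (auto simp: fun_eq_iff sum_apply sc_def S_def \<delta>_def if_distrib cong: if_cong)
    also have "\<dots> \<in> V.span (\<delta> ` D)"
      by (intro V.span_sum V.span_scale V.span_base) auto
    finally show "f \<in> V.span (\<delta> ` D)" .
  qed
  moreover have "T ` S \<subseteq> S"
    using support by (auto simp: S_def)
  moreover have "inj_on T S"
  proof (rule inj_onI)
    fix f1 f2 assume "f1 \<in> S" "f2 \<in> S" "T f1 = T f2"
    then have "f1 - f2 = 0"
      using inj[of "f1 - f2"] T.diff by (auto simp: S_def)
    then show "f1 = f2" by simp
  qed
  ultimately have "T ` S = S"
    using V.linear_inj_on_subspace_imp_surj_on[OF T.linear_axioms] D by blast
  moreover have "g \<in> S"
    using g by (simp add: S_def)
  ultimately obtain f where "f \<in> S" "T f = g"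
    by (metis imageE)
  then show ?thesis
    by (auto simp: S_def)
qed

lemma lap5_add: "lap5 N (\<lambda>i j. f i j + g i j) a b = lap5 N f a b + lap5 N g a b"
  unfolding lap5_def by (simp add: algebra_simps)

lemma lap5_diff: "lap5 N (\<lambda>i j. f i j - g i j) a b = lap5 N f a b - lap5 N g a b"
  unfolding lap5_def by (simp add: algebra_simps)

lemma lap5_scale: "lap5 N (\<lambda>i j. c * f i j) a b = c * lap5 N f a b"
  unfolding lap5_def by (simp add: algebra_simps)

lemma lap5_minus: "lap5 N (\<lambda>i j. - f i j) a b = - lap5 N f a b"
  unfolding lap5_def by (simp add: algebra_simps)

lemma lap5_square_le: "lap5 N (\<lambda>i j. (z i j)\<^sup>2) a b \<le> 2 * z a b * lap5 N z a b"
proof -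
  have "2 * z a b * lap5 N z a b - lap5 N (\<lambda>i j. (z i j)\<^sup>2) a b =
      (real N)\<^sup>2 * ((z (a-1) b - z a b)\<^sup>2 + (z (a+1) b - z a b)\<^sup>2
                   + (z a (b-1) - z a b)\<^sup>2 + (z a (b+1) - z a b)\<^sup>2)"
    unfolding lap5_def by (simp add: power2_eq_square algebra_simps)
  also have "\<dots> \<ge> 0" by simp
  finally show ?thesis by simp
qed

lemma lap5_err_nonpos:
  assumes "\<alpha> > 0"
    and Y: "lap5 N Y a b = F a b - (1/\<alpha>) * (real N)\<^sup>2 * P a b"
    and P: "lap5 N (\<lambda>i j. (real N)\<^sup>2 * P i j) a b = Y a b - Yd a b"
    and Y': "lap5 N Y' a b = F a b - (1/\<alpha>) * (real N)\<^sup>2 * P' a b"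
    and P': "lap5 N (\<lambda>i j. (real N)\<^sup>2 * P' i j) a b = Y' a b - Yd a b"
  shows "lap5 N (err N \<alpha> Y P Y' P') a b \<le> 0"
proof -
  define e where "e i j = Y i j - Y' i j" for i j
  define q where "q i j = (real N)\<^sup>2 * P i j - (real N)\<^sup>2 * P' i j" for i j
  have err_eq: "err N \<alpha> Y P Y' P' = (\<lambda>i j. (e i j)\<^sup>2 + (1/\<alpha>) * (q i j)\<^sup>2)"
    unfolding err_def e_def q_def
    by (simp add: fun_eq_iff power_mult_distrib flip: right_diff_distrib power_mult)
  have lap_e: "lap5 N e a b = - (1/\<alpha>) * q a b"
    unfolding e_def q_def lap5_diff Y Y' by (simp add: algebra_simps)
  have lap_q: "lap5 N q a b = e a b"
    unfolding e_def q_def lap5_diff[where f = "\<lambda>i j. (real N)\<^sup>2 * P i j"] P P' by simp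
  have "lap5 N (err N \<alpha> Y P Y' P') a b
      = lap5 N (\<lambda>i j. (e i j)\<^sup>2) a b + (1/\<alpha>) * lap5 N (\<lambda>i j. (q i j)\<^sup>2) a b"
    unfolding err_eq lap5_add lap5_scale ..
  also have "\<dots> \<le> 2 * e a b * lap5 N e a b + (1/\<alpha>) * (2 * q a b * lap5 N q a b)"
    using lap5_square_le[of N e a b] lap5_square_le[of N q a b] \<open>\<alpha> > 0\<close>
    by (intro add_mono mult_left_mono) auto
  also have "\<dots> = 0"
    unfolding lap_e lap_q by (simp add: algebra_simps)
  finally show ?thesis .
qed

lemma grid_pts_eq: "grid_pts N = {..N} \<times> {..N}"
  by (auto simp: grid_pts_def)

lemma finite_grid_pts: "finite (grid_pts N)"
  by (simp add: grid_pts_eq)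

lemma card_grid_pts: "card (grid_pts N) = (N + 1)\<^sup>2"
  by (simp add: grid_pts_eq card_cartesian_product power2_eq_square)

lemma interior_pts_subset_grid_pts: "interior_pts N \<subseteq> grid_pts N"
  by (auto simp: interior_pts_def grid_pts_def)

lemma sub_pts_subset_interior_pts:
  assumes "\<Omega> \<subseteq> unit_sq" and "N \<ge> 1"
  shows "sub_pts N \<Omega> \<subseteq> interior_pts N"
proof
  fix p assume "p \<in> sub_pts N \<Omega>"
  then obtain a b where p: "p = (a, b)" "(real a / real N, real b / real N) \<in> unit_sq"
    using assms(1) by (auto simp: sub_pts_def)
  have "real N > 0" using assms(2) by simp
  with p(2) have "0 < real a" "real a < real N" "0 < real b" "real b < real N"
    by (auto simp: unit_sq_def divide_less_eq zero_less_divide_iff)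
  then show "p \<in> interior_pts N"
    using p(1) by (auto simp: interior_pts_def)
qed

lemma active_sub_subset_interior_pts:
  assumes "admissible_decomp N O1 O2" and "N \<ge> 1"
  shows "active_sub N O1 O2 m \<subseteq> interior_pts N"
proof -
  have "O1 \<subseteq> unit_sq" "O2 \<subseteq> unit_sq"
    using assms(1) by (auto simp: admissible_decomp_def)
  then show ?thesis
    using sub_pts_subset_interior_pts assms(2) by (simp add: active_sub_def)
qed

lemma abs_le_gmaxnorm: "(a, b) \<in> grid_pts N \<Longrightarrow> \<bar>Z a b\<bar> \<le> gmaxnorm N Z"
  unfolding gmaxnorm_def using finite_grid_pts by (intro Max_ge) force+

lemma gmaxnorm_nonneg: "gmaxnorm N Z \<ge> 0"
  using abs_le_gmaxnorm[of 0 0 N Z] by (simp add: grid_pts_def)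

lemma gmaxnorm_eq_gmax:
  assumes "\<And>a b. (a, b) \<in> grid_pts N \<Longrightarrow> Z a b \<ge> 0"
  shows "gmaxnorm N Z = gmax N Z"
proof -
  have "(\<lambda>(a, b). \<bar>Z a b\<bar>) ` grid_pts N = (\<lambda>(a, b). Z a b) ` grid_pts N"
    using assms by (intro image_cong) auto
  then show ?thesis
    by (simp add: gmaxnorm_def gmax_def)
qed

lemma lap5_max_principle:
  assumes D: "D \<subseteq> interior_pts N"
    and sub: "\<forall>(a, b) \<in> D. lap5 N v a b \<le> 0"
    and outside: "\<forall>(a, b) \<in> grid_pts N - D. v a b \<le> 0"
  shows "\<forall>(a, b) \<in> grid_pts N. v a b \<le> 0"
proof (rule ccontr)
  assume "\<not> ?thesis"
  then obtain a1 b1 where p1: "(a1, b1) \<in> grid_pts N" "v a1 b1 > 0" by auto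
  define M where "M = Max ((\<lambda>(a, b). v a b) ` grid_pts N)"
  have le_M: "v a b \<le> M" if "(a, b) \<in> grid_pts N" for a b
    unfolding M_def using finite_grid_pts that by (intro Max_ge) force+
  have "M \<in> (\<lambda>(a, b). v a b) ` grid_pts N"
    unfolding M_def using finite_grid_pts p1(1) by (intro Max_in) auto
  then obtain p0 where p0: "p0 \<in> grid_pts N \<and> v (fst p0) (snd p0) = M"
    by auto
  \<comment> \<open>Among the maximisers take one with least first coordinate; its left neighbour is a
    maximiser too.\<close>
  obtain p where p: "p \<in> grid_pts N \<and> v (fst p) (snd p) = M"
    and least: "\<forall>q. q \<in> grid_pts N \<and> v (fst q) (snd q) = M \<longrightarrow> fst p \<le> fst q"
    using ex_has_least_nat[where P = "\<lambda>p. p \<in> grid_pts N \<and> v (fst p) (snd p) = M" and m = fst, OF p0]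
    by blast
  obtain a0 b0 where "p = (a0, b0)" by (cases p)
  with p have max: "(a0, b0) \<in> grid_pts N" "v a0 b0 = M" by auto
  have "M > 0" using le_M[OF p1(1)] p1(2) by simp
  have "(a0, b0) \<in> D"
  proof (rule ccontr)
    assume "(a0, b0) \<notin> D"
    then have "v a0 b0 \<le> 0" using outside max(1) by auto
    with max(2) \<open>M > 0\<close> show False by simp
  qed
  then have int: "1 \<le> a0" "a0 < N" "1 \<le> b0" "b0 < N"
    using D by (auto simp: interior_pts_def)
  then have nbrs: "v (a0-1) b0 \<le> M" "v (a0+1) b0 \<le> M" "v a0 (b0-1) \<le> M" "v a0 (b0+1) \<le> M"
    by (auto intro!: le_M simp: grid_pts_def)
  have "(real N)\<^sup>2 * (v (a0-1) b0 + v (a0+1) b0 - 4 * v a0 b0 + v a0 (b0-1) + v a0 (b0+1)) \<ge> 0"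
    using sub \<open>(a0, b0) \<in> D\<close> unfolding lap5_def by fastforce
  then have "v (a0-1) b0 + v (a0+1) b0 - 4 * v a0 b0 + v a0 (b0-1) + v a0 (b0+1) \<ge> 0"
    using int by (simp add: zero_le_mult_iff)
  then have "v (a0-1) b0 = M"
    using nbrs max(2) by linarith
  then have "a0 \<le> a0 - 1"
    using least[rule_format, of "(a0 - 1, b0)"] \<open>p = (a0, b0)\<close> int by (simp add: grid_pts_def)
  then show False using int by simp
qed

lemma lap5_dirichlet_solvable:
  assumes D: "D \<subseteq> interior_pts N"
  shows "\<exists>u. (\<forall>(a, b) \<in> D. lap5 N u a b = 0) \<and> (\<forall>a b. (a, b) \<notin> D \<longrightarrow> u a b = g a b)"
proof -
  define T where "T f = (\<lambda>(a, b). if (a, b) \<in> D then lap5 N (curry f) a b else 0)" for f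
  have "\<exists>f. (\<forall>p. p \<notin> D \<longrightarrow> f p = 0) \<and> T f = (\<lambda>(a, b). if (a, b) \<in> D then - lap5 N g a b else 0)"
  proof (rule finite_support_linear_inj_imp_surj)
    show "finite D"
      using D finite_grid_pts interior_pts_subset_grid_pts by (metis finite_subset)
    show "T (f + h) = T f + T h" for f h
      by (auto simp: T_def fun_eq_iff curry_def lap5_add[symmetric])
    show "T (\<lambda>p. c * f p) = (\<lambda>p. c * T f p)" for c f
      by (auto simp: T_def fun_eq_iff curry_def lap5_scale[symmetric])
    show "T f p = 0" if "p \<notin> D" for f p
      using that by (auto simp: T_def split: prod.splits)
    show "f = 0" if f0: "\<forall>p. p \<notin> D \<longrightarrow> f p = 0" and Tf: "T f = 0" for f
    proof -
      have L0: "lap5 N (curry f) a b = 0" if "(a, b) \<in> D" for a b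
        using fun_cong[OF Tf, of "(a, b)"] that by (simp add: T_def)
      have "\<forall>(a, b) \<in> grid_pts N. curry f a b \<le> 0"
        by (rule lap5_max_principle[OF D]) (use L0 f0 in \<open>auto simp: curry_def\<close>)
      moreover have "\<forall>(a, b) \<in> grid_pts N. - curry f a b \<le> 0"
        by (rule lap5_max_principle[OF D]) (use L0 f0 in \<open>auto simp: curry_def lap5_minus\<close>)
      ultimately have "f p = 0" if "p \<in> D" for p
        using that D interior_pts_subset_grid_pts by fastforce
      then show "f = 0"
        using f0 by (auto simp: fun_eq_iff)
    qed
  qed (auto split: prod.splits)
  then obtain f where f: "\<forall>p. p \<notin> D \<longrightarrow> f p = 0"
    and Tf: "T f = (\<lambda>(a, b). if (a, b) \<in> D then - lap5 N g a b else 0)" by blast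
  define u where "u a b = g a b + curry f a b" for a b
  have "lap5 N u a b = 0" if "(a, b) \<in> D" for a b
  proof -
    have "lap5 N (curry f) a b = - lap5 N g a b"
      using fun_cong[OF Tf, of "(a, b)"] that by (simp add: T_def)
    then show ?thesis
      unfolding u_def lap5_add by simp
  qed
  moreover have "u a b = g a b" if "(a, b) \<notin> D" for a b
    using that f by (simp add: u_def)
  ultimately show ?thesis by blast
qed

lemma schwarz_laplace_exists:
  assumes act: "\<And>m. active_sub N O1 O2 m \<subseteq> interior_pts N"
    and init: "\<forall>(a, b) \<in> boundary_pts N. W0 a b = 0"
  shows "\<exists>W. schwarz_laplace N O1 O2 W \<and> W 0 = W0"
proof -
  define ext where "ext D g = (SOME u. (\<forall>(a, b) \<in> D. lap5 N u a b = 0) \<and>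
      (\<forall>a b. (a, b) \<notin> D \<longrightarrow> u a b = g a b))" for D g
  have ext: "(\<forall>(a, b) \<in> D. lap5 N (ext D g) a b = 0) \<and> (\<forall>a b. (a, b) \<notin> D \<longrightarrow> ext D g a b = g a b)"
    if "D \<subseteq> interior_pts N" for D g
    unfolding ext_def by (rule someI_ex[OF lap5_dirichlet_solvable[OF that]])
  define W where "W = rec_nat W0 (\<lambda>m w. ext (active_sub N O1 O2 (Suc m)) w)"
  have W_0: "W 0 = W0" and W_Suc: "W (Suc m) = ext (active_sub N O1 O2 (Suc m)) (W m)" for m
    by (simp_all add: W_def)
  have "(\<forall>(a, b) \<in> active_sub N O1 O2 m. lap5 N (W m) a b = 0) \<and>
      (\<forall>(a, b) \<in> grid_pts N - active_sub N O1 O2 m. W m a b = W (m - 1) a b)" if "m \<ge> 1" for m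
  proof -
    obtain m' where m: "m = Suc m'" using \<open>m \<ge> 1\<close> by (cases m) auto
    show ?thesis
      using ext[OF act, of m "W m'"] unfolding m W_Suc by auto
  qed
  then have "schwarz_laplace N O1 O2 W"
    using init W_0 by (simp add: schwarz_laplace_def)
  with W_0 show ?thesis by blast
qed

lemma schwarz_laplace_dominates_subsolution:
  assumes act: "\<And>m. active_sub N O1 O2 m \<subseteq> interior_pts N"
    and W: "schwarz_laplace N O1 O2 W"
    and sub: "\<And>m a b. m \<ge> 1 \<Longrightarrow> (a, b) \<in> active_sub N O1 O2 m \<Longrightarrow> lap5 N (V m) a b \<le> 0"
    and keep: "\<And>m a b. m \<ge> 1 \<Longrightarrow> (a, b) \<in> grid_pts N - active_sub N O1 O2 m \<Longrightarrow>
                 V m a b = V (m - 1) a b"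
    and init: "\<And>a b. (a, b) \<in> grid_pts N \<Longrightarrow> V 0 a b \<le> W 0 a b"
  shows "(a, b) \<in> grid_pts N \<Longrightarrow> V m a b \<le> W m a b"
proof (induction m arbitrary: a b)
  case 0
  then show ?case by (rule init)
next
  case (Suc m)
  let ?D = "active_sub N O1 O2 (Suc m)"
  have "Suc m \<ge> 1" by simp
  from W[unfolded schwarz_laplace_def, THEN conjunct2, rule_format, OF this]
  have W_Suc: "(\<forall>(a, b) \<in> ?D. lap5 N (W (Suc m)) a b = 0) \<and>
      (\<forall>(a, b) \<in> grid_pts N - ?D. W (Suc m) a b = W m a b)"
    by (simp only: diff_Suc_1)
  have "\<forall>(a, b) \<in> grid_pts N. V (Suc m) a b - W (Suc m) a b \<le> 0"
  proof (rule lap5_max_principle[OF act])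
    show "\<forall>(a, b) \<in> ?D. lap5 N (\<lambda>i j. V (Suc m) i j - W (Suc m) i j) a b \<le> 0"
    proof clarify
      fix a b assume ab: "(a, b) \<in> ?D"
      have "lap5 N (V (Suc m)) a b \<le> 0" using sub[OF _ ab] by simp
      moreover have "lap5 N (W (Suc m)) a b = 0" using W_Suc ab by auto
      ultimately show "lap5 N (\<lambda>i j. V (Suc m) i j - W (Suc m) i j) a b \<le> 0"
        by (simp add: lap5_diff)
    qed
    show "\<forall>(a, b) \<in> grid_pts N - ?D. V (Suc m) a b - W (Suc m) a b \<le> 0"
    proof clarify
      fix a b assume ab: "(a, b) \<in> grid_pts N" "(a, b) \<notin> ?D"
      have "V (Suc m) a b = V m a b" using keep[of "Suc m" a b] ab by simp
      moreover have "W (Suc m) a b = W m a b" using W_Suc ab by auto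
      ultimately show "V (Suc m) a b - W (Suc m) a b \<le> 0" using Suc.IH[OF ab(1)] by simp
    qed
  qed
  then show ?case using Suc.prems by auto
qed

lemma gmaxnorm_double_step_contraction_power:
  assumes "\<rho> \<ge> 0"
    and contraction: "\<forall>k\<ge>1. gmaxnorm N (W (2*k)) \<le> \<rho> * gmaxnorm N (W (2*(k-1)))"
  shows "gmaxnorm N (W (2*k)) \<le> \<rho> ^ k * gmaxnorm N (W 0)"
proof (induction k)
  case (Suc k)
  have "gmaxnorm N (W (2 * Suc k)) \<le> \<rho> * gmaxnorm N (W (2*k))"
    using contraction[rule_format, of "Suc k"] by simp
  also have "\<dots> \<le> \<rho> * (\<rho> ^ k * gmaxnorm N (W 0))"
    using Suc.IH \<open>\<rho> \<ge> 0\<close> by (rule mult_left_mono)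
  finally show ?case by simp
qed simp

lemma grid_weighted_sum_le:
  assumes "N \<ge> 1" and "M \<ge> 0" and le_M: "\<And>a b. (a, b) \<in> grid_pts N \<Longrightarrow> v a b \<le> M"
  shows "(\<Sum>(a, b) \<in> grid_pts N. (1 / real N)\<^sup>2 * v a b) \<le> 4 * M"
proof -
  have "(\<Sum>(a, b) \<in> grid_pts N. (1 / real N)\<^sup>2 * v a b) \<le> (\<Sum>(a, b) \<in> grid_pts N. (1 / real N)\<^sup>2 * M)"
    using le_M by (intro sum_mono) (auto intro: mult_left_mono)
  also have "\<dots> = ((real N + 1) / real N)\<^sup>2 * M"
    by (simp add: card_grid_pts power_divide)
  also have "\<dots> \<le> 2\<^sup>2 * M"
  proof (intro mult_right_mono power_mono)
    show "(real N + 1) / real N \<le> 2" using assms(1) by (simp add: divide_le_eq)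
  qed (use assms in auto)
  finally show ?thesis by simp
qed

lemma err_schwarz_opt_subsolution:
  assumes act: "\<And>m. active_sub N O1 O2 m \<subseteq> interior_pts N" and "\<alpha> > 0"
    and opt: "optsys N \<alpha> F Yd Y P" and sch: "schwarz_opt N O1 O2 \<alpha> F Yd Ys Ps"
    and "m \<ge> 1"
  shows "(a, b) \<in> active_sub N O1 O2 m \<Longrightarrow> lap5 N (err N \<alpha> Y P (Ys m) (Ps m)) a b \<le> 0"
    and "(a, b) \<in> grid_pts N - active_sub N O1 O2 m \<Longrightarrow>
           err N \<alpha> Y P (Ys m) (Ps m) a b = err N \<alpha> Y P (Ys (m - 1)) (Ps (m - 1)) a b"
proof -
  have step: "(\<forall>(a, b) \<in> active_sub N O1 O2 m.
        lap5 N (Ys m) a b = F a b - (1/\<alpha>) * (real N)\<^sup>2 * Ps m a b \<and>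
        lap5 N (\<lambda>i j. (real N)\<^sup>2 * Ps m i j) a b = Ys m a b - Yd a b) \<and>
      (\<forall>(a, b) \<in> grid_pts N - active_sub N O1 O2 m. Ys m a b = Ys (m - 1) a b \<and> Ps m a b = Ps (m - 1) a b)"
    using sch[unfolded schwarz_opt_def, THEN conjunct2, rule_format, OF \<open>m \<ge> 1\<close>] .
  {
    assume ab: "(a, b) \<in> active_sub N O1 O2 m"
    then have "(a, b) \<in> interior_pts N" using act by blast
    from opt[unfolded optsys_def, THEN conjunct1, rule_format, OF this]
    have "lap5 N Y a b = F a b - (1/\<alpha>) * (real N)\<^sup>2 * P a b"
      "lap5 N (\<lambda>i j. (real N)\<^sup>2 * P i j) a b = Y a b - Yd a b"
      by simp_all
    moreover from step[THEN conjunct1, rule_format, OF ab]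
    have "lap5 N (Ys m) a b = F a b - (1/\<alpha>) * (real N)\<^sup>2 * Ps m a b"
      "lap5 N (\<lambda>i j. (real N)\<^sup>2 * Ps m i j) a b = Ys m a b - Yd a b"
      by simp_all
    ultimately show "lap5 N (err N \<alpha> Y P (Ys m) (Ps m)) a b \<le> 0"
      by (rule lap5_err_nonpos[OF \<open>\<alpha> > 0\<close>])
  }
  assume ab: "(a, b) \<in> grid_pts N - active_sub N O1 O2 m"
  from step[THEN conjunct2, rule_format, OF ab]
  show "err N \<alpha> Y P (Ys m) (Ps m) a b = err N \<alpha> Y P (Ys (m - 1)) (Ps (m - 1)) a b"
    by (simp add: err_def)
qed

lemma err_initial_boundary:
  assumes "optsys N \<alpha> F Yd Y P" and "schwarz_opt N O1 O2 \<alpha> F Yd Ys Ps"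
  shows "\<forall>(a, b) \<in> boundary_pts N. err N \<alpha> Y P (Ys 0) (Ps 0) a b = 0"
proof clarify
  fix a b assume ab: "(a, b) \<in> boundary_pts N"
  show "err N \<alpha> Y P (Ys 0) (Ps 0) a b = 0"
    using bspec[OF assms(1)[unfolded optsys_def, THEN conjunct2] ab]
      bspec[OF assms(2)[unfolded schwarz_opt_def, THEN conjunct1] ab]
    by (simp add: err_def)
qed

theorem corollary4p1:
  shows "\<exists>C>0. \<forall>(N::nat) O1 O2 (\<alpha>::real) F Yd Y P Ys Ps (\<rho>::real).
     N \<ge> 2 \<longrightarrow> admissible_decomp N O1 O2 \<longrightarrow> \<alpha> > 0 \<longrightarrow>
     optsys N \<alpha> F Yd Y P \<longrightarrow>
     schwarz_opt N O1 O2 \<alpha> F Yd Ys Ps \<longrightarrow>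
     0 < \<rho> \<longrightarrow> \<rho> < 1 \<longrightarrow>
     (\<forall>W. schwarz_laplace N O1 O2 W \<longrightarrow>
        (\<forall>k\<ge>1. gmaxnorm N (W (2*k)) \<le> \<rho> * gmaxnorm N (W (2*(k-1))))) \<longrightarrow>
     (\<forall>k\<ge>1. (\<Sum>(a,b)\<in>grid_pts N. (1 / real N)^2 * err N \<alpha> Y P (Ys (2*k)) (Ps (2*k)) a b)
              \<le> C * \<rho>^k * gmax N (err N \<alpha> Y P (Ys 0) (Ps 0)))"
proof (intro exI[of _ 4] conjI allI impI)
  fix N O1 O2 \<alpha> F Yd Y P Ys Ps \<rho> and k :: nat
  assume "N \<ge> 2" "admissible_decomp N O1 O2" "\<alpha> > 0" and opt: "optsys N \<alpha> F Yd Y P"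
    and sch: "schwarz_opt N O1 O2 \<alpha> F Yd Ys Ps" and "0 < \<rho>"
    and contraction: "\<forall>W. schwarz_laplace N O1 O2 W \<longrightarrow>
        (\<forall>k\<ge>1. gmaxnorm N (W (2*k)) \<le> \<rho> * gmaxnorm N (W (2*(k-1))))"
  define E where "E m = err N \<alpha> Y P (Ys m) (Ps m)" for m
  have act: "\<And>m. active_sub N O1 O2 m \<subseteq> interior_pts N"
    using active_sub_subset_interior_pts \<open>admissible_decomp N O1 O2\<close> \<open>N \<ge> 2\<close> by simp
  have max_E0: "gmaxnorm N (E 0) = gmax N (E 0)"
    using \<open>\<alpha> > 0\<close> by (intro gmaxnorm_eq_gmax) (simp add: E_def err_def)
  obtain W where W: "schwarz_laplace N O1 O2 W" "W 0 = E 0"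
    using schwarz_laplace_exists[OF act, of "E 0"] err_initial_boundary[OF opt sch]
    by (auto simp: E_def)
  have "E (2*k) a b \<le> \<rho> ^ k * gmax N (E 0)" if ab: "(a, b) \<in> grid_pts N" for a b
  proof -
    have "E (2*k) a b \<le> W (2*k) a b"
      by (rule schwarz_laplace_dominates_subsolution[OF act W(1), where V = E, OF _ _ _ ab])
        (use err_schwarz_opt_subsolution[OF act \<open>\<alpha> > 0\<close> opt sch] W(2) in \<open>auto simp: E_def\<close>)
    also have "\<dots> \<le> gmaxnorm N (W (2*k))"
      using abs_le_gmaxnorm[OF ab, of "W (2*k)"] by linarith
    also have "\<dots> \<le> \<rho> ^ k * gmaxnorm N (W 0)"
      using \<open>0 < \<rho>\<close> contraction W(1) by (intro gmaxnorm_double_step_contraction_power) auto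
    finally show ?thesis
      using W(2) max_E0 by simp
  qed
  moreover have "gmax N (E 0) \<ge> 0"
    using gmaxnorm_nonneg[of N "E 0"] max_E0 by simp
  ultimately have "(\<Sum>(a, b) \<in> grid_pts N. (1 / real N)\<^sup>2 * E (2*k) a b) \<le> 4 * (\<rho> ^ k * gmax N (E 0))"
    using \<open>N \<ge> 2\<close> \<open>0 < \<rho>\<close> by (intro grid_weighted_sum_le) auto
  then show "(\<Sum>(a, b) \<in> grid_pts N. (1 / real N)^2 * err N \<alpha> Y P (Ys (2*k)) (Ps (2*k)) a b)
      \<le> 4 * \<rho> ^ k * gmax N (err N \<alpha> Y P (Ys 0) (Ps 0))"
    by (simp add: E_def mult.assoc)
qed simp

end
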